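(* Let $K\subset\mathbb R^n$ be a convex body with $0$ in its interior, and let $N=N(K,B_2^n)$. Then for every $\varepsilon\in(0,1)$, \[ \sigma\left(\left\{\theta\in S^{n-1}:\rho_K(\theta)\le\frac{1}{\sqrt{1-\varepsilon^2}}\right\}\right)\ge 1-2e^{\log N-\frac12 n\varepsilon^2}. \]
   Context: A convex body is a compact convex set with nonempty interior. $B_2^n$ is the closed Euclidean unit ball, $S^{n-1}$ the unit sphere, and $\sigma$ the unique rotation-invariant probability measure on $S^{n-1}$. The covering number is $N(K,T)=\min\{N:\exists x_1,\dots,x_N\in\mathbb R^n,\ K\subset\bigcup_{i=1}^N(x_i+T)\}$. The radial function is $\rho_K(\theta)=\sup\{t\ge0:t\theta\in K\}$ for $\theta\in S^{n-1}$. *)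

theory Defs
  imports "HOL-Analysis.Analysis"
begin

definition covering_number :: "'a::real_vector set \<Rightarrow> 'a set \<Rightarrow> nat" where
  "covering_number K T =
     (LEAST N. \<exists>X. finite X \<and> card X = N \<and> K \<subseteq> (\<Union>x\<in>X. (\<lambda>y. x + y) ` T))"

definition radial_fn :: "'a::real_vector set \<Rightarrow> 'a \<Rightarrow> real" where
  "radial_fn K \<theta> = Sup {t. 0 \<le> t \<and> t *\<^sub>R \<theta> \<in> K}"

text \<open>Normalized rotation-invariant (surface) probability measure on the unit sphere,
  realized as the normalized cone measure: sigma(A) = vol{t theta : 0 < t <= 1, theta in A} / vol(B).\<close>
definition sphere_measure :: "'a::euclidean_space set \<Rightarrow> real" where
  "sphere_measure A =
     measure lebesgue {t *\<^sub>R \<theta> | t \<theta>. 0 < t \<and> t \<le> 1 \<and> \<theta> \<in> A \<inter> sphere 0 1}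
       / measure lebesgue (cball (0::'a) 1)"

end

theory Submission
  imports Defs
begin

text \<open>Put \<open>c = 1 / sqrt (1 - \<epsilon>\<^sup>2)\<close> and cover \<open>K\<close> by \<open>N\<close> unit balls with centres in \<open>X\<close>.
  If \<open>\<rho>\<^sub>K(\<theta>) > c\<close>, some \<open>t \<theta>\<close> with \<open>t > c\<close> lies in \<open>K\<close>, hence in a ball around some \<open>x \<in> X\<close>;
  since \<open>t\<close> is large, this forces \<open>\<theta> \<bullet> x \<ge> \<epsilon> |x|\<close>, i.e. \<open>\<theta>\<close> lies in a spherical cap around
  \<open>x / |x|\<close>. The cone over such a cap, cut off at the unit sphere, fits into a ball of radius
  \<open>r \<le> exp (- \<epsilon>\<^sup>2 / 2)\<close>. So, up to the origin, the unit ball is covered by the cone over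
  \<open>{\<rho>\<^sub>K \<le> c}\<close> and \<open>N\<close> balls of radius \<open>r\<close>, and comparing volumes gives
  \<open>\<sigma>{\<rho>\<^sub>K \<le> c} \<ge> 1 - N r\<^sup>n \<ge> 1 - N exp (- n \<epsilon>\<^sup>2 / 2)\<close>; the factor 2 of the statement is slack.\<close>

lemma covering_number_attained:
  fixes K T :: "'a::real_normed_vector set"
  assumes "compact K" "interior T \<noteq> {}"
  obtains X where "finite X" "card X = covering_number K T"
    "K \<subseteq> (\<Union>x\<in>X. (\<lambda>y. x + y) ` T)"
proof -
  let ?covers = "\<lambda>N. \<exists>X. finite X \<and> card X = N \<and> K \<subseteq> (\<Union>x\<in>X. (\<lambda>y. x + y) ` T)"
  obtain a where "a \<in> interior T" using assms(2) by blast
  then obtain e where e: "0 < e" "ball a e \<subseteq> interior T"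
    using openE[OF open_interior] by metis
  have ball: "ball x e \<subseteq> (\<lambda>y. (x - a) + y) ` T" for x
  proof
    fix z assume "z \<in> ball x e"
    then have "z - (x - a) \<in> T"
      using e(2) interior_subset by (force simp: dist_norm algebra_simps)
    then show "z \<in> (\<lambda>y. (x - a) + y) ` T" by (rule rev_image_eqI) simp
  qed
  obtain D where D: "finite D" "K \<subseteq> (\<Union>x\<in>D. ball x e)"
    by (rule compactE_image[OF assms(1), of K "\<lambda>x. ball x e"]) (use e(1) in auto)
  have "K \<subseteq> (\<Union>x\<in>(\<lambda>x. x - a) ` D. (\<lambda>y. x + y) ` T)"
  proof
    fix k assume "k \<in> K"
    with D(2) obtain x where "x \<in> D" "k \<in> ball x e" by blast
    with ball show "k \<in> (\<Union>x\<in>(\<lambda>x. x - a) ` D. (\<lambda>y. x + y) ` T)" by blast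
  qed
  with D(1) have "?covers (card ((\<lambda>x. x - a) ` D))" by blast
  then have "?covers (LEAST N. ?covers N)" by (rule LeastI)
  with that show ?thesis unfolding covering_number_def by blast
qed

lemma covering_number_pos:
  fixes K T :: "'a::real_normed_vector set"
  assumes "compact K" "K \<noteq> {}" "interior T \<noteq> {}"
  shows "0 < covering_number K T"
proof -
  obtain X where X: "finite X" "card X = covering_number K T"
    "K \<subseteq> (\<Union>x\<in>X. (\<lambda>y. x + y) ` T)"
    using covering_number_attained[OF assms(1,3)] by blast
  with assms(2) have "X \<noteq> {}" by blast
  with X(1) show ?thesis unfolding X(2)[symmetric] by (simp add: card_gt_0_iff)
qed

lemma radial_fn_le_iff:
  fixes K :: "'a::real_normed_vector set"
  assumes "bounded K" "0 \<in> K" "\<theta> \<noteq> 0" "0 \<le> c"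
  shows "radial_fn K \<theta> \<le> c \<longleftrightarrow> (\<forall>t>c. t *\<^sub>R \<theta> \<notin> K)"
proof -
  let ?S = "{t. 0 \<le> t \<and> t *\<^sub>R \<theta> \<in> K}"
  obtain B where B: "\<And>y. y \<in> K \<Longrightarrow> norm y \<le> B"
    using assms(1) by (auto simp: bounded_iff)
  have "t \<le> B / norm \<theta>" if "t \<in> ?S" for t
  proof -
    have "t * norm \<theta> \<le> B" using B[of "t *\<^sub>R \<theta>"] that by simp
    then show ?thesis using assms(3) by (simp add: pos_le_divide_eq)
  qed
  then have "bdd_above ?S" by (rule bdd_aboveI)
  moreover have "0 \<in> ?S" using assms(2) by simp
  ultimately have "radial_fn K \<theta> \<le> c \<longleftrightarrow> (\<forall>t\<in>?S. t \<le> c)"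
    unfolding radial_fn_def by (intro cSup_le_iff) auto
  also have "\<dots> \<longleftrightarrow> (\<forall>t>c. t *\<^sub>R \<theta> \<notin> K)"
  proof
    assume H: "\<forall>t\<in>?S. t \<le> c"
    show "\<forall>t>c. t *\<^sub>R \<theta> \<notin> K"
    proof (intro allI impI notI)
      fix t assume t: "t > c" "t *\<^sub>R \<theta> \<in> K"
      then have "t \<in> ?S" using assms(4) by simp
      with H have "t \<le> c" by blast
      with t(1) show False by simp
    qed
  next
    assume H: "\<forall>t>c. t *\<^sub>R \<theta> \<notin> K"
    show "\<forall>t\<in>?S. t \<le> c"
    proof
      fix t assume "t \<in> ?S"
      with H show "t \<le> c" using not_le by blast
    qed
  qed
  finally show ?thesis .
qed

lemma scaleR_mem_interior_convex:
  fixes K :: "'a::euclidean_space set"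
  assumes "convex K" "0 \<in> interior K" "x \<in> K" "0 \<le> s" "s < 1"
  shows "s *\<^sub>R x \<in> interior K"
proof -
  have "x - (1 - s) *\<^sub>R (x - 0) = s *\<^sub>R x"
    by (simp add: scaleR_diff_left)
  then show ?thesis
    using mem_interior_convex_shrink[OF assms(1-3), of "1 - s"] assms(4,5) by simp
qed

lemma radial_fn_le_iff_interior:
  fixes K :: "'a::euclidean_space set"
  assumes "convex K" "bounded K" "0 \<in> interior K" "\<theta> \<noteq> 0" "0 \<le> c"
  shows "radial_fn K \<theta> \<le> c \<longleftrightarrow> (\<forall>t>c. t *\<^sub>R \<theta> \<notin> interior K)"
proof -
  have "\<exists>s>c. s *\<^sub>R \<theta> \<in> interior K" if t: "t > c" "t *\<^sub>R \<theta> \<in> K" for t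
  proof -
    let ?s = "(c + t) / 2"
    have "(?s / t) *\<^sub>R (t *\<^sub>R \<theta>) \<in> interior K"
      using assms(5) t by (intro scaleR_mem_interior_convex[OF assms(1,3) t(2)]) auto
    with t assms(5) show ?thesis by (intro exI[of _ ?s]) auto
  qed
  then show ?thesis
    using radial_fn_le_iff[OF assms(2) interior_subset[THEN subsetD, OF assms(3)] assms(4,5)]
      interior_subset by blast
qed

lemma closed_rays_avoiding_open:
  fixes U :: "'a::real_normed_vector set"
  assumes "open U"
  shows "closed {\<theta>. \<forall>t>c. t *\<^sub>R \<theta> \<notin> U}"
proof -
  have "open (\<Union>t\<in>{c<..}. (\<lambda>\<theta>. t *\<^sub>R \<theta>) -` U)"
    using assms by (intro open_UN ballI continuous_open_vimage) (auto intro: continuous_intros)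
  moreover have "{\<theta>. \<forall>t>c. t *\<^sub>R \<theta> \<notin> U} = - (\<Union>t\<in>{c<..}. (\<lambda>\<theta>. t *\<^sub>R \<theta>) -` U)"
    by auto
  ultimately show ?thesis by (simp add: closed_def)
qed

definition unit_cone :: "'a::euclidean_space set \<Rightarrow> 'a set" where
  "unit_cone A = {t *\<^sub>R \<theta> | t \<theta>. 0 < t \<and> t \<le> 1 \<and> \<theta> \<in> A \<inter> sphere 0 1}"

lemma sphere_measure_eq_unit_cone:
  fixes A :: "'a::euclidean_space set"
  shows "sphere_measure A = measure lebesgue (unit_cone A) / measure lebesgue (cball (0::'a) 1)"
  by (simp only: sphere_measure_def unit_cone_def)

lemma unit_cone_eq_sgn_vimage: "unit_cone A = (cball 0 1 - {0}) \<inter> sgn -` A"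
proof (intro equalityI subsetI)
  fix y assume "y \<in> unit_cone A"
  then obtain t \<theta> where "y = t *\<^sub>R \<theta>" "0 < t" "t \<le> 1" "\<theta> \<in> A" "norm \<theta> = 1"
    by (auto simp: unit_cone_def)
  then show "y \<in> (cball 0 1 - {0}) \<inter> sgn -` A"
    by (auto simp: sgn_scaleR sgn_div_norm)
next
  fix y assume y: "y \<in> (cball 0 1 - {0}) \<inter> sgn -` A"
  then have "y = norm y *\<^sub>R sgn y" "norm (sgn y) = 1"
    by (auto simp: norm_sgn sgn_div_norm)
  with y show "y \<in> unit_cone A"
    unfolding unit_cone_def by (auto intro!: exI[of _ "norm y"])
qed

text \<open>Convexity is used only here: it lets \<open>K\<close> be replaced by its interior, which turns
  \<open>{\<rho>\<^sub>K \<le> c}\<close> into a closed set of directions.\<close>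

lemma unit_cone_radial_le_lmeasurable:
  fixes K :: "'a::euclidean_space set"
  assumes "convex K" "bounded K" "0 \<in> interior K" "0 \<le> c"
  shows "unit_cone {\<theta> \<in> sphere 0 1. radial_fn K \<theta> \<le> c} \<in> lmeasurable"
proof -
  let ?F = "{\<theta>. \<forall>t>c. t *\<^sub>R \<theta> \<notin> interior K}"
  have "unit_cone {\<theta> \<in> sphere 0 1. radial_fn K \<theta> \<le> c} = (cball 0 1 - {0}) \<inter> sgn -` ?F"
    unfolding unit_cone_eq_sgn_vimage using radial_fn_le_iff_interior[OF assms(1-3) _ assms(4)]
    by (auto simp: norm_sgn sgn_zero_iff)
  moreover have "sgn -` ?F \<in> sets borel"
    using closed_rays_avoiding_open[of "interior K" c]
    by (intro measurable_sets_borel[OF borel_measurable_sgn]) auto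
  ultimately show ?thesis
    by (intro bounded_set_imp_lmeasurable) (auto intro: sets_completionI_sets)
qed

lemma measure_ge_if_punctured_unit_ball_covered:
  fixes C :: "'a::euclidean_space set" and r :: real
  assumes C: "C \<in> lmeasurable" and X: "finite X" and r: "0 \<le> r"
    and cover: "cball 0 1 - {0} \<subseteq> C \<union> (\<Union>x\<in>X. cball (f x) r)"
  shows "(1 - card X * r ^ DIM('a)) * measure lebesgue (cball (0::'a) 1) \<le> measure lebesgue C"
proof -
  let ?U = "\<Union>x\<in>X. cball (f x) r" and ?v = "measure lebesgue (cball (0::'a) 1)"
  have U: "?U \<in> lmeasurable" using X by (intro bounded_set_imp_lmeasurable) auto
  have "?v = measure lebesgue (cball (0::'a) 1 - {0})"
    by (rule sym, rule measure_Diff_null_set) auto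
  also have "\<dots> \<le> measure lebesgue (C \<union> ?U)"
    using C U by (intro measure_mono_fmeasurable[OF cover]) auto
  also have "\<dots> \<le> measure lebesgue C + measure lebesgue ?U"
    using C U by (intro measure_Un_le) auto
  also have "measure lebesgue ?U \<le> (\<Sum>x\<in>X. measure lebesgue (cball (f x) r))"
    using X by (intro measure_UNION_le) auto
  also have "\<dots> = card X * r ^ DIM('a) * ?v"
    using r by (simp add: content_cball)
  finally show ?thesis by (simp add: algebra_simps)
qed

lemma ray_meets_unit_ball_far_imp_inner_ge:
  fixes \<theta> x :: "'a::real_inner"
  assumes \<theta>: "norm \<theta> = 1" and \<epsilon>: "\<epsilon>\<^sup>2 < 1" and t: "1 / sqrt (1 - \<epsilon>\<^sup>2) < t"
    and near: "dist (t *\<^sub>R \<theta>) x \<le> 1"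
  shows "x \<noteq> 0" and "\<epsilon> * norm x \<le> \<theta> \<bullet> x"
proof -
  have q: "0 < 1 - \<epsilon>\<^sup>2" using \<epsilon> by simp
  then have "0 < 1 / sqrt (1 - \<epsilon>\<^sup>2)" by simp
  with t have t0: "0 < t" by linarith
  have "1 < t * sqrt (1 - \<epsilon>\<^sup>2)" using t q by (simp add: field_simps)
  then have "1\<^sup>2 < (t * sqrt (1 - \<epsilon>\<^sup>2))\<^sup>2" by (rule power_strict_mono) auto
  then have far: "1 < (1 - \<epsilon>\<^sup>2) * t\<^sup>2" using q by (simp add: power_mult_distrib mult.commute)
  have "(dist (t *\<^sub>R \<theta>) x)\<^sup>2 = t\<^sup>2 - 2 * t * (\<theta> \<bullet> x) + (norm x)\<^sup>2"
    using \<theta> unfolding dist_norm power2_norm_eq_inner norm_eq_1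
    by (simp add: inner_diff_left inner_diff_right inner_commute power2_eq_square algebra_simps)
  moreover have "(dist (t *\<^sub>R \<theta>) x)\<^sup>2 \<le> 1"
    using near by (simp add: power_le_one)
  ultimately have inner: "t\<^sup>2 - 1 + (norm x)\<^sup>2 \<le> 2 * t * (\<theta> \<bullet> x)"
    by linarith
  have "0 \<le> (\<epsilon> * t - norm x)\<^sup>2" by simp
  then have "2 * t * (\<epsilon> * norm x) \<le> (\<epsilon> * t)\<^sup>2 + (norm x)\<^sup>2"
    by (simp add: power2_diff algebra_simps)
  also have "\<dots> < t\<^sup>2 - 1 + (norm x)\<^sup>2"
    using far by (simp add: power_mult_distrib algebra_simps)
  finally have "2 * t * (\<epsilon> * norm x) \<le> 2 * t * (\<theta> \<bullet> x)"
    using inner by linarith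
  then show "\<epsilon> * norm x \<le> \<theta> \<bullet> x"
    by (rule mult_left_le_imp_le) (use t0 in simp)
  show "x \<noteq> 0"
  proof
    assume "x = 0"
    then have "t\<^sup>2 \<le> 1" using near \<theta> t0 by (simp add: power_le_one)
    moreover have "(1 - \<epsilon>\<^sup>2) * t\<^sup>2 \<le> t\<^sup>2" by (simp add: algebra_simps)
    ultimately show False using far by linarith
  qed
qed

text \<open>A ball containing the cone \<open>{s \<theta> | 0 \<le> s \<le> 1, \<theta> \<bullet> u \<ge> \<epsilon>}\<close> over a spherical cap.
  For \<open>\<epsilon>\<^sup>2 > 1/2\<close> the natural ball, centred at \<open>\<epsilon> u\<close> with radius \<open>sqrt (1 - \<epsilon>\<^sup>2)\<close>,
  misses the apex \<open>0\<close>; there the ball with diameter \<open>[0, u / \<epsilon>]\<close> is used instead.\<close>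

definition cap_ball_center :: "real \<Rightarrow> real" where
  "cap_ball_center \<epsilon> = (if \<epsilon>\<^sup>2 \<le> 1/2 then \<epsilon> else 1 / (2 * \<epsilon>))"

definition cap_ball_radius :: "real \<Rightarrow> real" where
  "cap_ball_radius \<epsilon> = (if \<epsilon>\<^sup>2 \<le> 1/2 then sqrt (1 - \<epsilon>\<^sup>2) else 1 / (2 * \<epsilon>))"

lemma cap_ball_radius_nonneg: "0 \<le> \<epsilon> \<Longrightarrow> 0 \<le> cap_ball_radius \<epsilon>"
  by (simp add: cap_ball_radius_def)

lemma cap_ball_radius_le_exp:
  assumes "0 < \<epsilon>" "\<epsilon> < 1"
  shows "cap_ball_radius \<epsilon> \<le> exp (- (\<epsilon>\<^sup>2 / 2))"
proof (cases "\<epsilon>\<^sup>2 \<le> 1/2")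
  case True
  have "(sqrt (1 - \<epsilon>\<^sup>2))\<^sup>2 = 1 - \<epsilon>\<^sup>2" using True by simp
  also have "\<dots> \<le> exp (- \<epsilon>\<^sup>2)" using exp_ge_add_one_self[of "- \<epsilon>\<^sup>2"] by simp
  also have "\<dots> = (exp (- (\<epsilon>\<^sup>2 / 2)))\<^sup>2" by (simp add: power2_eq_square exp_add[symmetric])
  finally have "sqrt (1 - \<epsilon>\<^sup>2) \<le> exp (- (\<epsilon>\<^sup>2 / 2))" by (rule power2_le_imp_le) simp
  with True show ?thesis by (simp add: cap_ball_radius_def)
next
  case False
  have "\<epsilon>\<^sup>2 < \<epsilon>" using assms by (simp add: power2_eq_square)
  then have "0 \<le> (1 - \<epsilon>) * (\<epsilon>\<^sup>2 + \<epsilon> - 1)" using assms False by (intro mult_nonneg_nonneg) auto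
  then have "1 / (2 * \<epsilon>) \<le> 1 - \<epsilon>\<^sup>2 / 2"
    using assms by (simp add: field_simps power2_eq_square)
  also have "\<dots> \<le> exp (- (\<epsilon>\<^sup>2 / 2))" using exp_ge_add_one_self[of "- (\<epsilon>\<^sup>2 / 2)"] by simp
  finally show ?thesis using False by (simp add: cap_ball_radius_def)
qed

lemma scaleR_mem_cap_ball:
  fixes u \<theta> :: "'a::real_inner"
  assumes u: "norm u = 1" and \<theta>: "norm \<theta> = 1" and \<epsilon>: "0 \<le> \<epsilon>" "\<epsilon> \<le> \<theta> \<bullet> u"
    and s: "0 \<le> s" "s \<le> 1"
  shows "s *\<^sub>R \<theta> \<in> cball (cap_ball_center \<epsilon> *\<^sub>R u) (cap_ball_radius \<epsilon>)"
proof -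
  let ?c = "cap_ball_center \<epsilon>" and ?r = "cap_ball_radius \<epsilon>"
  have c: "0 \<le> ?c" using \<epsilon>(1) by (simp add: cap_ball_center_def)
  have "(dist (?c *\<^sub>R u) (s *\<^sub>R \<theta>))\<^sup>2 = s\<^sup>2 - 2 * s * ?c * (\<theta> \<bullet> u) + ?c\<^sup>2"
    using u \<theta> unfolding dist_norm power2_norm_eq_inner norm_eq_1
    by (simp add: inner_diff_left inner_diff_right inner_commute power2_eq_square algebra_simps)
  also have "\<dots> \<le> s\<^sup>2 - 2 * s * ?c * \<epsilon> + ?c\<^sup>2"
  proof -
    have "2 * s * ?c * \<epsilon> \<le> 2 * s * ?c * (\<theta> \<bullet> u)"
      using \<epsilon>(2) s(1) c by (intro mult_left_mono) auto
    then show ?thesis by linarith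
  qed
  also have "\<dots> \<le> ?r\<^sup>2"
  proof (cases "\<epsilon>\<^sup>2 \<le> 1/2")
    case True
    then have c_eq: "?c = \<epsilon>" and r_sq: "?r\<^sup>2 = 1 - \<epsilon>\<^sup>2"
      by (simp_all add: cap_ball_center_def cap_ball_radius_def)
    have "(s - 1) * (s + 1 - 2 * \<epsilon>\<^sup>2) \<le> 0" using s True by (intro mult_nonpos_nonneg) auto
    then have "s\<^sup>2 - 2 * s * \<epsilon> * \<epsilon> + \<epsilon>\<^sup>2 \<le> 1 - \<epsilon>\<^sup>2"
      by (simp add: power2_eq_square algebra_simps)
    then show ?thesis unfolding c_eq r_sq .
  next
    case False
    then have "\<epsilon> \<noteq> 0" by auto
    with False have c_eq: "?c = ?r" and cancel: "2 * s * ?c * \<epsilon> = s"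
      by (simp_all add: cap_ball_center_def cap_ball_radius_def)
    have "s * s \<le> s" using mult_left_le_one_le[OF s(1) s(1) s(2)] .
    then show ?thesis using cancel unfolding c_eq power2_eq_square by linarith
  qed
  finally have "(dist (?c *\<^sub>R u) (s *\<^sub>R \<theta>))\<^sup>2 \<le> ?r\<^sup>2" .
  then have "dist (?c *\<^sub>R u) (s *\<^sub>R \<theta>) \<le> ?r"
    by (rule power2_le_imp_le) (rule cap_ball_radius_nonneg[OF \<epsilon>(1)])
  then show ?thesis unfolding mem_cball .
qed

lemma punctured_unit_ball_subset_cone_Un_cap_balls:
  fixes K X :: "'a::euclidean_space set"
  assumes K: "bounded K" "0 \<in> K" "K \<subseteq> (\<Union>x\<in>X. cball x 1)" and \<epsilon>: "0 < \<epsilon>" "\<epsilon> < 1"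
  shows "cball 0 1 - {0} \<subseteq> unit_cone {\<theta> \<in> sphere 0 1. radial_fn K \<theta> \<le> 1 / sqrt (1 - \<epsilon>\<^sup>2)}
           \<union> (\<Union>x\<in>X. cball (cap_ball_center \<epsilon> *\<^sub>R sgn x) (cap_ball_radius \<epsilon>))"
proof
  fix y :: 'a
  assume y: "y \<in> cball 0 1 - {0}"
  let ?c = "1 / sqrt (1 - \<epsilon>\<^sup>2)"
  have sgn_y: "sgn y \<noteq> 0" "norm (sgn y) = 1" using y by (auto simp: norm_sgn sgn_zero_iff)
  show "y \<in> unit_cone {\<theta> \<in> sphere 0 1. radial_fn K \<theta> \<le> ?c}
           \<union> (\<Union>x\<in>X. cball (cap_ball_center \<epsilon> *\<^sub>R sgn x) (cap_ball_radius \<epsilon>))"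
  proof (cases "radial_fn K (sgn y) \<le> ?c")
    case True
    with y sgn_y show ?thesis by (simp add: unit_cone_eq_sgn_vimage)
  next
    case False
    have \<epsilon>_sq: "\<epsilon>\<^sup>2 < 1" using \<epsilon> by (simp add: abs_square_less_1)
    then have "0 \<le> ?c" by simp
    then have "\<not> (\<forall>t>?c. t *\<^sub>R sgn y \<notin> K)"
      using False radial_fn_le_iff[OF K(1,2) sgn_y(1)] by simp
    then obtain t where t: "t > ?c" "t *\<^sub>R sgn y \<in> K"
      by blast
    with K(3) obtain x where x: "x \<in> X" "dist (t *\<^sub>R sgn y) x \<le> 1"
      by (auto simp: dist_commute)
    note inner = ray_meets_unit_ball_far_imp_inner_ge[OF sgn_y(2) \<epsilon>_sq t(1) x(2)]
    have "\<epsilon> \<le> (sgn y \<bullet> x) / norm x"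
      using inner by (simp add: pos_le_divide_eq)
    also have "\<dots> = sgn y \<bullet> sgn x"
      by (simp add: sgn_div_norm divide_inverse ac_simps)
    finally have cap: "\<epsilon> \<le> sgn y \<bullet> sgn x" .
    have sgn_x: "norm (sgn x) = 1" using inner(1) by (simp add: norm_sgn)
    have "norm y \<le> 1" using y by simp
    with scaleR_mem_cap_ball[OF sgn_x sgn_y(2) less_imp_le[OF \<epsilon>(1)] cap norm_ge_zero]
    have "norm y *\<^sub>R sgn y \<in> cball (cap_ball_center \<epsilon> *\<^sub>R sgn x) (cap_ball_radius \<epsilon>)" .
    moreover have "norm y *\<^sub>R sgn y = y" using y by (simp add: sgn_div_norm)
    ultimately have "y \<in> cball (cap_ball_center \<epsilon> *\<^sub>R sgn x) (cap_ball_radius \<epsilon>)" by (simp only:)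
    then show ?thesis by (intro UnI2 UN_I[OF x(1)])
  qed
qed

lemma sphere_measure_radial_le_ge:
  fixes K :: "'a::euclidean_space set"
  assumes "convex K" "compact K" "0 \<in> interior K" "0 < \<epsilon>" "\<epsilon> < 1"
  shows "1 - covering_number K (cball 0 1) * cap_ball_radius \<epsilon> ^ DIM('a)
           \<le> sphere_measure {\<theta> \<in> sphere 0 1. radial_fn K \<theta> \<le> 1 / sqrt (1 - \<epsilon>\<^sup>2)}"
proof -
  let ?A = "{\<theta> \<in> sphere 0 1. radial_fn K \<theta> \<le> 1 / sqrt (1 - \<epsilon>\<^sup>2)}"
  have K: "bounded K" "0 \<in> K"
    using assms(2,3) compact_imp_bounded interior_subset by auto
  obtain X where X: "finite X" "card X = covering_number K (cball 0 1)" "K \<subseteq> (\<Union>x\<in>X. cball x 1)"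
    using covering_number_attained[OF assms(2), of "cball 0 1"] by auto
  have "0 \<le> 1 / sqrt (1 - \<epsilon>\<^sup>2)"
    using assms(4,5) by (simp add: abs_square_le_1)
  note cone_measurable = unit_cone_radial_le_lmeasurable[OF assms(1) K(1) assms(3) this]
  note cover = punctured_unit_ball_subset_cone_Un_cap_balls[OF K X(3) assms(4,5)]
  have "(1 - card X * cap_ball_radius \<epsilon> ^ DIM('a)) * measure lebesgue (cball (0::'a) 1)
          \<le> measure lebesgue (unit_cone ?A)"
    using measure_ge_if_punctured_unit_ball_covered[OF cone_measurable X(1) _ cover]
      cap_ball_radius_nonneg assms(4) by simp
  then show ?thesis
    using X(2) content_cball_pos[of 1 "0::'a"]
    by (simp add: sphere_measure_eq_unit_cone pos_le_divide_eq)
qed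

theorem proposition2p3:
  fixes K :: "'a::euclidean_space set" and \<epsilon> :: real
  assumes "convex K" and "compact K" and "0 \<in> interior K"
    and "0 < \<epsilon>" and "\<epsilon> < 1"
  shows "sphere_measure {\<theta> \<in> sphere 0 1. radial_fn K \<theta> \<le> 1 / sqrt (1 - \<epsilon>\<^sup>2)}
           \<ge> 1 - 2 * exp (ln (real (covering_number K (cball 0 1)))
                           - real DIM('a) * \<epsilon>\<^sup>2 / 2)"
proof -
  let ?N = "covering_number K (cball (0::'a) 1)"
    and ?decay = "exp (- (real DIM('a) * \<epsilon>\<^sup>2 / 2))"
  have "0 < ?N"
    using covering_number_pos[OF assms(2)] assms(3) interior_subset by fastforce
  have "exp (ln ?N - real DIM('a) * \<epsilon>\<^sup>2 / 2) = exp (ln ?N) * ?decay"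
    by (simp add: exp_add[symmetric])
  also have "exp (ln ?N) = ?N" using \<open>0 < ?N\<close> by simp
  finally have rhs: "exp (ln ?N - real DIM('a) * \<epsilon>\<^sup>2 / 2) = ?N * ?decay" .
  have "cap_ball_radius \<epsilon> ^ DIM('a) \<le> exp (- (\<epsilon>\<^sup>2 / 2)) ^ DIM('a)"
    using assms(4,5) by (intro power_mono cap_ball_radius_le_exp cap_ball_radius_nonneg) auto
  then have lhs: "?N * cap_ball_radius \<epsilon> ^ DIM('a) \<le> ?N * ?decay"
    by (simp add: mult_left_mono exp_of_nat_mult[symmetric])
  have "0 \<le> ?N * ?decay" by simp
  then show ?thesis
    unfolding rhs using sphere_measure_radial_le_ge[OF assms] lhs by linarith
qed

end
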